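(* Let $T$ be the DFS tree produced by DFS-v1 or DFS-v2 on a temporal graph $G$ from source $s$ with starting time $t_s$. Then no root-to-leaf path of $T$ contains two distinct occurrences of the same vertex of $G$; equivalently, no vertex of $G$ is, along a single root-to-leaf path, both an ancestor and a descendant of an occurrence of another vertex.
   Context: A temporal graph is a pair $G=(V,E)$ where $V$ is a finite set of vertices and $E$ is a finite set of temporal edges, i.e. triples $(u,v,t)$ with $u,v\in V$, $u\neq v$, $t\in\mathbb{R}$ (the time at which the edge is active); distinct elements of $E$ are distinct triples. Fix a starting time $t_s\in\mathbb{R}$ and a source vertex $s\in V$. Temporal DFS (versions v1 and v2). The procedure maintains a value $\sigma(x)\in\mathbb{R}\cup\{\infty\}$ for every $x\in V$, initially $\infty$, and a set of already traversed edges, initially empty, and builds a rooted tree $T$ whose nodes are occurrences of vertices of $G$ (a vertex may occur several times in $T$). Each occurrence carries a label, namely the value assigned to $\sigma(x)$ when that occurrence was created. Start: create the root occurrence of $s$, set $\sigma(s)=t_s$ (its label), and make it the current occurrence. Step (a): let $u$ be the vertex of the current occurrence, $\sigma_u$ its label, and $A$ the set of edges $(u,v,t)\in E$ not yet traversed with $\sigma_u\le t$. If $A=\emptyset$: if the current occurrence is the root, terminate; otherwise make its parent occurrence current (backtrack) and repeat step (a). If $A\neq\emptyset$, select an edge $e=(u,v,t)\in A$ by the selection rule, mark $e$ as traversed and go to step (b). Step (b): if the current value $\sigma(v)$ satisfies $\sigma(v)>t$, create a new occurrence of $v$ as a child of the current occurrence, set $\sigma(v):=t$ (so the new occurrence has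 label $t$), call $e$ a tree edge, make the new occurrence current and go to step (a); otherwise go to step (a) with the same current occurrence. Selection rule of DFS-v1: choose any vertex $v$ such that $A$ contains an edge to $v$, and select the edge of $A$ to $v$ with the smallest time. Selection rule of DFS-v2: select an edge of $A$ with the largest time. All remaining choices are arbitrary. $T$ is the DFS tree; its edges are the tree edges. *)

theory Defs
  imports Main "HOL-Library.Extended_Real"
begin

definition temporal_graph :: "'v set \<Rightarrow> ('v \<times> 'v \<times> real) set \<Rightarrow> bool" where
  "temporal_graph V E \<longleftrightarrow> finite V \<and> finite E \<and>
     (\<forall>(u, v, t) \<in> E. u \<in> V \<and> v \<in> V \<and> u \<noteq> v)"

text \<open>Occurrence number i of the tree is
  occs ! i = (vertex, label, parent occurrence); occurrence 0 is the root
  (parent None).  sig is sigma (infinity = not yet assigned), trav is the set of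
  already traversed edges, fin says that the procedure has terminated.\<close>
record 'v dfs_state =
  occs :: "('v \<times> real \<times> nat option) list"
  cur :: nat
  sig :: "'v \<Rightarrow> ereal"
  trav :: "('v \<times> 'v \<times> real) set"
  fin :: bool

datatype dfs_version = DFS_v1 | DFS_v2

definition select_edge :: "dfs_version \<Rightarrow> ('v \<times> 'v \<times> real) set \<Rightarrow> ('v \<times> 'v \<times> real) \<Rightarrow> bool" where
  "select_edge ver A e \<longleftrightarrow> e \<in> A \<and>
     (case ver of
        DFS_v1 \<Rightarrow> (\<forall>e' \<in> A. fst (snd e') = fst (snd e) \<longrightarrow> snd (snd e) \<le> snd (snd e'))
      | DFS_v2 \<Rightarrow> (\<forall>e' \<in> A. snd (snd e') \<le> snd (snd e)))"

definition avail :: "('v \<times> 'v \<times> real) set \<Rightarrow> 'v dfs_state \<Rightarrow> ('v \<times> 'v \<times> real) set" where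
  "avail E st = {e \<in> E. fst e = fst (occs st ! cur st) \<and> e \<notin> trav st \<and>
                       fst (snd (occs st ! cur st)) \<le> snd (snd e)}"

definition dfs_init :: "'v \<Rightarrow> real \<Rightarrow> 'v dfs_state" where
  "dfs_init s ts = \<lparr> occs = [(s, ts, None)], cur = 0, sig = (\<lambda>_. \<infinity>)(s := ereal ts),
                     trav = {}, fin = False \<rparr>"

inductive dfs_step :: "dfs_version \<Rightarrow> ('v \<times> 'v \<times> real) set \<Rightarrow> 'v dfs_state \<Rightarrow> 'v dfs_state \<Rightarrow> bool"
  for ver E where
  terminate: "\<lbrakk> \<not> fin st; avail E st = {}; cur st = 0 \<rbrakk>
     \<Longrightarrow> dfs_step ver E st (st\<lparr> fin := True \<rparr>)"
| backtrack: "\<lbrakk> \<not> fin st; avail E st = {}; cur st \<noteq> 0;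
               snd (snd (occs st ! cur st)) = Some p \<rbrakk>
     \<Longrightarrow> dfs_step ver E st (st\<lparr> cur := p \<rparr>)"
| tree_edge: "\<lbrakk> \<not> fin st; select_edge ver (avail E st) (u, v, t); sig st v > ereal t \<rbrakk>
     \<Longrightarrow> dfs_step ver E st (st\<lparr> occs := occs st @ [(v, t, Some (cur st))],
                               cur := length (occs st),
                               sig := (sig st)(v := ereal t),
                               trav := insert (u, v, t) (trav st) \<rparr>)"
| non_tree_edge: "\<lbrakk> \<not> fin st; select_edge ver (avail E st) (u, v, t); \<not> sig st v > ereal t \<rbrakk>
     \<Longrightarrow> dfs_step ver E st (st\<lparr> trav := insert (u, v, t) (trav st) \<rparr>)"

definition tree_rel :: "'v dfs_state \<Rightarrow> (nat \<times> nat) set" where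
  "tree_rel st = {(p, c). c < length (occs st) \<and> snd (snd (occs st ! c)) = Some p}"

end

theory Submission
  imports Defs
begin

text \<open>Labels weakly increase from parent to child, since an edge is only available if its
  time is at least the label of the current occurrence.  The value \<sigma>(v) never exceeds the
  label of an existing occurrence of v, and a new occurrence of v is created only with a
  label t < \<sigma>(v); hence a later occurrence of a vertex has a strictly smaller label than
  every earlier one.  An occurrence and its descendants (created later, with labels at least
  as large) therefore never belong to the same vertex.  Neither the selection rule nor
  termination plays a role.\<close>

abbreviation occ_vertex :: "'v dfs_state \<Rightarrow> nat \<Rightarrow> 'v" where
  "occ_vertex st i \<equiv> fst (occs st ! i)"

abbreviation occ_label :: "'v dfs_state \<Rightarrow> nat \<Rightarrow> real" where
  "occ_label st i \<equiv> fst (snd (occs st ! i))"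

abbreviation occ_parent :: "'v dfs_state \<Rightarrow> nat \<Rightarrow> nat option" where
  "occ_parent st i \<equiv> snd (snd (occs st ! i))"

definition dfs_invariant :: "'v dfs_state \<Rightarrow> bool" where
  "dfs_invariant st \<longleftrightarrow> cur st < length (occs st) \<and>
     (\<forall>c < length (occs st). \<forall>p. occ_parent st c = Some p \<longrightarrow>
        p < c \<and> occ_label st p \<le> occ_label st c) \<and>
     (\<forall>c < length (occs st). sig st (occ_vertex st c) \<le> ereal (occ_label st c)) \<and>
     (\<forall>i j. i < j \<longrightarrow> j < length (occs st) \<longrightarrow> occ_vertex st i = occ_vertex st j \<longrightarrow>
        occ_label st j < occ_label st i)"

lemma dfs_invariant_init: "dfs_invariant (dfs_init s ts)"
  by (simp add: dfs_invariant_def dfs_init_def)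

lemma dfs_invariant_new_occurrence:
  assumes inv: "dfs_invariant st"
    and parent_label: "occ_label st (cur st) \<le> t"
    and below_sig: "ereal t < sig st v"
  shows "dfs_invariant (st\<lparr> occs := occs st @ [(v, t, Some (cur st))],
                             cur := length (occs st),
                             sig := (sig st)(v := ereal t),
                             trav := T \<rparr>)"
    (is "dfs_invariant ?st'")
proof -
  let ?n = "length (occs st)"
  have cur: "cur st < ?n"
    and parent: "\<And>c p. c < ?n \<Longrightarrow> occ_parent st c = Some p \<Longrightarrow>
                   p < c \<and> occ_label st p \<le> occ_label st c"
    and sig: "\<And>c. c < ?n \<Longrightarrow> sig st (occ_vertex st c) \<le> ereal (occ_label st c)"
    and repeat: "\<And>i j. i < j \<Longrightarrow> j < ?n \<Longrightarrow> occ_vertex st i = occ_vertex st j \<Longrightarrow>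
                   occ_label st j < occ_label st i"
    using inv unfolding dfs_invariant_def by blast+
  have earlier_v: "t < occ_label st c" if "c < ?n" "occ_vertex st c = v" for c
  proof -
    have "ereal t < sig st (occ_vertex st c)"
      using below_sig that(2) by simp
    also have "\<dots> \<le> ereal (occ_label st c)"
      using sig[OF that(1)] .
    finally show ?thesis
      by simp
  qed
  have "\<forall>c < Suc ?n. \<forall>p. occ_parent ?st' c = Some p \<longrightarrow>
          p < c \<and> occ_label ?st' p \<le> occ_label ?st' c"
    using parent cur parent_label by (force simp: nth_append less_Suc_eq)
  moreover have "\<forall>c < Suc ?n. sig ?st' (occ_vertex ?st' c) \<le> ereal (occ_label ?st' c)"
    using sig earlier_v by (auto simp: nth_append less_Suc_eq less_imp_le)
  moreover have "\<forall>i j. i < j \<longrightarrow> j < Suc ?n \<longrightarrow> occ_vertex ?st' i = occ_vertex ?st' j \<longrightarrow>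
                   occ_label ?st' j < occ_label ?st' i"
    using repeat earlier_v by (auto simp: nth_append less_Suc_eq)
  ultimately show ?thesis
    unfolding dfs_invariant_def by simp
qed

lemma dfs_invariant_step:
  assumes "dfs_step ver E st st'" and "dfs_invariant st"
  shows "dfs_invariant st'"
  using assms
proof (induction rule: dfs_step.induct)
  case (tree_edge st u v t)
  then have "occ_label st (cur st) \<le> t"
    by (simp add: select_edge_def avail_def)
  with tree_edge show ?case
    by (intro dfs_invariant_new_occurrence) auto
qed (auto simp: dfs_invariant_def)

lemma dfs_invariant_reachable:
  assumes "(dfs_step ver E)\<^sup>*\<^sup>* (dfs_init s ts) st"
  shows "dfs_invariant st"
  using assms
  by (induction rule: rtranclp_induct) (auto intro: dfs_invariant_init dfs_invariant_step)

lemma tree_rel_trancl_label_mono: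
  assumes "dfs_invariant st" and "(i, j) \<in> (tree_rel st)\<^sup>+"
  shows "i < j \<and> j < length (occs st) \<and> occ_label st i \<le> occ_label st j"
  using assms(2)
proof (induction rule: trancl_induct)
  case (base j)
  then show ?case
    using assms(1) unfolding tree_rel_def dfs_invariant_def by auto
next
  case (step j k)
  then have "j < k \<and> k < length (occs st) \<and> occ_label st j \<le> occ_label st k"
    using assms(1) unfolding tree_rel_def dfs_invariant_def by auto
  with step.IH show ?case
    by auto
qed

theorem lemma4:
  fixes V :: "'v set" and E :: "('v \<times> 'v \<times> real) set" and s :: 'v and ts :: real
    and ver :: dfs_version and st :: "'v dfs_state"
  assumes "temporal_graph V E" and "s \<in> V"
    and "(dfs_step ver E)\<^sup>*\<^sup>* (dfs_init s ts) st" and "fin st"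
    and "(i, j) \<in> (tree_rel st)\<^sup>+"
  shows "fst (occs st ! i) \<noteq> fst (occs st ! j)"
proof
  assume same_vertex: "fst (occs st ! i) = fst (occs st ! j)"
  have inv: "dfs_invariant st"
    using assms(3) by (rule dfs_invariant_reachable)
  then have "i < j" "j < length (occs st)" "occ_label st i \<le> occ_label st j"
    using assms(5) by (auto dest: tree_rel_trancl_label_mono)
  moreover have "occ_label st j < occ_label st i"
    using inv same_vertex \<open>i < j\<close> \<open>j < length (occs st)\<close> unfolding dfs_invariant_def by blast
  ultimately show False
    by simp
qed

end
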